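(* Let $(X_B,X_C,X_R)$ be an OCC of a graph $G$, let $f_X$ be a proper $2$-coloring of $G[X_B]$, and let $B^\ast \subseteq X_B$ satisfy property $(\star)$ with respect to $G$, $(X_B,X_C,X_R)$ and $f_X$. If $G$ contains a $z$-tight OCC $(A_B,A_C,A_R)$, then $G$ contains a $z$-tight OCC $(A_B^\ast, A_C^\ast, A_R^\ast)$ with $|A_C^\ast| = |A_C|$ and $A_C^\ast \cap X_B \subseteq B^\ast$.
   Context: An OCT of $G$ is a set $S \subseteq V(G)$ with $G - S$ bipartite; $\mathrm{oct}(G)$ is its minimum size. An odd cycle cut (OCC) of $G$ is a partition $(X_B, X_C, X_R)$ of $V(G)$ such that $G[X_B]$ is bipartite, there is no edge between $X_B$ and $X_R$, and $X_B \cup X_C \neq \emptyset$. It is tight if $|X_C| = \mathrm{oct}(G[X_B \cup X_C])$. An $X_C$-certificate of order $z$ is a subgraph $H$ of $G$ such that $H - X_C$ is bipartite, $\mathrm{oct}(H)=|X_C|$, and each connected component $H'$ of $H$ has $|X_C\cap V(H')|\le z$. A tight OCC $(A_B,A_C,A_R)$ is $z$-tight if $G[A_B\cup A_C]$ contains an $A_C$-certificate of order $z$. A vertex set $X$ separates vertex sets $S,T$ if no component of the graph minus $X$ meets both. Auxiliary graph: $G_{\mathrm{aux}}$ is obtained from a copy of $G[X_B]$ by adding, for each $v \in X_C$, new vertices $v^{(0)}, v^{(1)}$ and, for each $u \in N_G(v) \cap X_B$, the edge $v^{(f_X(u))}u$; $T := \{v^{(i)} : v \in X_C, i \in \{0,1\}\}$.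 Property $(\star)$ of $B^\ast \subseteq X_B$: for every partition $(T_1,T_2,T_3,T_X)$ of $T$ into four possibly empty parts, if there exists $S \subseteq X_B$ with $|S| \le |T|$ separating $T_i$ and $T_j$ in $G_{\mathrm{aux}} - T_X$ for all $1 \le i < j \le 3$, then $B^\ast$ contains such a set $S$ of minimum possible size. *)

theory Defs
  imports Main
begin

definition graph :: "'a set \<Rightarrow> ('a \<Rightarrow> 'a \<Rightarrow> bool) \<Rightarrow> bool" where
  "graph V E \<longleftrightarrow> finite V \<and> (\<forall>u v. E u v \<longrightarrow> E v u)
     \<and> (\<forall>u. \<not> E u u) \<and> (\<forall>u v. E u v \<longrightarrow> u \<in> V \<and> v \<in> V)"

definition proper_2col :: "('a \<Rightarrow> 'a \<Rightarrow> bool) \<Rightarrow> 'a set \<Rightarrow> ('a \<Rightarrow> bool) \<Rightarrow> bool" where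
  "proper_2col E S f \<longleftrightarrow> (\<forall>u\<in>S. \<forall>v\<in>S. E u v \<longrightarrow> f u \<noteq> f v)"

definition bipartite_on :: "('a \<Rightarrow> 'a \<Rightarrow> bool) \<Rightarrow> 'a set \<Rightarrow> bool" where
  "bipartite_on E S \<longleftrightarrow> (\<exists>f. proper_2col E S f)"

text \<open>oct of the graph (V,E): minimum size of a vertex set whose removal leaves
a bipartite graph. oct(G[S]) is oct S E.\<close>
definition oct :: "'a set \<Rightarrow> ('a \<Rightarrow> 'a \<Rightarrow> bool) \<Rightarrow> nat" where
  "oct V E = Min {card X | X. X \<subseteq> V \<and> bipartite_on E (V - X)}"

definition is_OCC :: "'a set \<Rightarrow> ('a \<Rightarrow> 'a \<Rightarrow> bool) \<Rightarrow> 'a set \<Rightarrow> 'a set \<Rightarrow> 'a set \<Rightarrow> bool" where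
  "is_OCC V E XB XC XR \<longleftrightarrow>
     XB \<union> XC \<union> XR = V \<and> XB \<inter> XC = {} \<and> XB \<inter> XR = {} \<and> XC \<inter> XR = {}
     \<and> bipartite_on E XB \<and> (\<forall>u\<in>XB. \<forall>v\<in>XR. \<not> E u v) \<and> XB \<union> XC \<noteq> {}"

definition tight_OCC :: "'a set \<Rightarrow> ('a \<Rightarrow> 'a \<Rightarrow> bool) \<Rightarrow> 'a set \<Rightarrow> 'a set \<Rightarrow> 'a set \<Rightarrow> bool" where
  "tight_OCC V E XB XC XR \<longleftrightarrow> is_OCC V E XB XC XR \<and> card XC = oct (XB \<union> XC) E"

definition reach :: "'a set \<Rightarrow> ('a \<Rightarrow> 'a \<Rightarrow> bool) \<Rightarrow> 'a \<Rightarrow> 'a \<Rightarrow> bool" where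
  "reach W E a b \<longleftrightarrow> a \<in> W \<and> (\<lambda>x y. x \<in> W \<and> y \<in> W \<and> E x y)\<^sup>*\<^sup>* a b"

definition component :: "'a set \<Rightarrow> ('a \<Rightarrow> 'a \<Rightarrow> bool) \<Rightarrow> 'a \<Rightarrow> 'a set" where
  "component W E v = {u. reach W E v u}"

definition subgraph_of :: "'a set \<Rightarrow> ('a \<Rightarrow> 'a \<Rightarrow> bool) \<Rightarrow> 'a set \<Rightarrow> ('a \<Rightarrow> 'a \<Rightarrow> bool)
    \<Rightarrow> 'a set \<Rightarrow> bool" where
  "subgraph_of VH EH V E S \<longleftrightarrow> VH \<subseteq> S \<and> S \<subseteq> V \<and> (\<forall>u v. EH u v \<longrightarrow> EH v u)
     \<and> (\<forall>u v. EH u v \<longrightarrow> E u v \<and> u \<in> VH \<and> v \<in> VH)"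

definition certificate :: "'a set \<Rightarrow> ('a \<Rightarrow> 'a \<Rightarrow> bool) \<Rightarrow> 'a set \<Rightarrow> nat \<Rightarrow> bool" where
  "certificate VH EH XC z \<longleftrightarrow> bipartite_on EH (VH - XC) \<and> oct VH EH = card XC
     \<and> (\<forall>v\<in>VH. card (XC \<inter> component VH EH v) \<le> z)"

definition z_tight_OCC :: "'a set \<Rightarrow> ('a \<Rightarrow> 'a \<Rightarrow> bool) \<Rightarrow> nat \<Rightarrow> 'a set \<Rightarrow> 'a set \<Rightarrow> 'a set \<Rightarrow> bool" where
  "z_tight_OCC V E z AB AC AR \<longleftrightarrow> tight_OCC V E AB AC AR \<and>
     (\<exists>VH EH. subgraph_of VH EH V E (AB \<union> AC) \<and> certificate VH EH AC z)"

text \<open>Auxiliary graph: Inl u is the copy of u in X_B, Inr (v,i) is v^(i) for v in X_C.\<close>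
definition aux_V :: "'a set \<Rightarrow> 'a set \<Rightarrow> ('a + 'a \<times> bool) set" where
  "aux_V XB XC = Inl ` XB \<union> Inr ` (XC \<times> UNIV)"

definition aux_T :: "'a set \<Rightarrow> ('a + 'a \<times> bool) set" where
  "aux_T XC = Inr ` (XC \<times> UNIV)"

definition aux_E :: "('a \<Rightarrow> 'a \<Rightarrow> bool) \<Rightarrow> 'a set \<Rightarrow> 'a set \<Rightarrow> ('a \<Rightarrow> bool)
    \<Rightarrow> ('a + 'a \<times> bool) \<Rightarrow> ('a + 'a \<times> bool) \<Rightarrow> bool" where
  "aux_E E XB XC f x y \<longleftrightarrow>
     (\<exists>u w. x = Inl u \<and> y = Inl w \<and> u \<in> XB \<and> w \<in> XB \<and> E u w)
   \<or> (\<exists>v u. x = Inr (v, f u) \<and> y = Inl u \<and> v \<in> XC \<and> u \<in> XB \<and> E v u)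
   \<or> (\<exists>v u. y = Inr (v, f u) \<and> x = Inl u \<and> v \<in> XC \<and> u \<in> XB \<and> E v u)"

definition separates :: "'b set \<Rightarrow> ('b \<Rightarrow> 'b \<Rightarrow> bool) \<Rightarrow> 'b set \<Rightarrow> 'b set \<Rightarrow> 'b set \<Rightarrow> bool" where
  "separates W E X A B \<longleftrightarrow> \<not> (\<exists>a\<in>A. \<exists>b\<in>B. reach (W - X) E a b)"

definition sep3 :: "('a \<Rightarrow> 'a \<Rightarrow> bool) \<Rightarrow> 'a set \<Rightarrow> 'a set \<Rightarrow> ('a \<Rightarrow> bool)
    \<Rightarrow> ('a + 'a \<times> bool) set \<Rightarrow> ('a + 'a \<times> bool) set \<Rightarrow> ('a + 'a \<times> bool) set
    \<Rightarrow> ('a + 'a \<times> bool) set \<Rightarrow> 'a set \<Rightarrow> bool" where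
  "sep3 E XB XC f T1 T2 T3 TX S \<longleftrightarrow>
     (let W = aux_V XB XC - TX; Ea = aux_E E XB XC f; X = Inl ` S in
       separates W Ea X T1 T2 \<and> separates W Ea X T1 T3 \<and> separates W Ea X T2 T3)"

definition star_property :: "('a \<Rightarrow> 'a \<Rightarrow> bool) \<Rightarrow> 'a set \<Rightarrow> 'a set \<Rightarrow> ('a \<Rightarrow> bool)
    \<Rightarrow> 'a set \<Rightarrow> bool" where
  "star_property E XB XC f Bs \<longleftrightarrow> Bs \<subseteq> XB \<and>
    (\<forall>T1 T2 T3 TX. T1 \<union> T2 \<union> T3 \<union> TX = aux_T XC \<and>
        T1 \<inter> T2 = {} \<and> T1 \<inter> T3 = {} \<and> T1 \<inter> TX = {} \<and> T2 \<inter> T3 = {} \<and> T2 \<inter> TX = {}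
        \<and> T3 \<inter> TX = {} \<longrightarrow>
      (\<exists>S. S \<subseteq> XB \<and> card S \<le> card (aux_T XC) \<and> sep3 E XB XC f T1 T2 T3 TX S) \<longrightarrow>
      (\<exists>S. S \<subseteq> Bs \<and> sep3 E XB XC f T1 T2 T3 TX S \<and>
         (\<forall>S'. S' \<subseteq> XB \<and> sep3 E XB XC f T1 T2 T3 TX S' \<longrightarrow> card S \<le> card S')))"

end

theory Submission
  imports Defs
begin

text \<open>Let \<open>Y = AC \<inter> XB\<close> and let \<open>g\<close> 2-colour \<open>G[AB]\<close>. The cut \<open>(AB, AC, AR)\<close> splits the
  terminals into \<open>T1\<close> (the copies \<open>v^(g v)\<close> with \<open>v \<in> XC \<inter> AB\<close>), \<open>T2\<close> (their twins), \<open>T3\<close>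
  (copies of \<open>XC \<inter> AR\<close>) and \<open>TX\<close> (copies of \<open>XC \<inter> AC\<close>). By a parity argument \<open>Y\<close> separates
  \<open>T1, T2, T3\<close> in \<open>G_aux - TX\<close>, so \<open>(\<star>)\<close> provides a minimum such separator \<open>S \<subseteq> B*\<close>.
  Tightness forbids a \<open>T1\<close>-\<open>T2\<close> separator inside \<open>(AB \<union> AC) \<inter> XB\<close> smaller than \<open>Y\<close>, so \<open>S\<close>
  lies there and \<open>|S| = |Y|\<close>; uncrossing the two minimum separators shows that every vertex of
  \<open>Y - S\<close> is reachable from \<open>T1 \<union> T2\<close> around \<open>S\<close>, hence no walk from \<open>T3\<close> around \<open>S\<close> enters
  \<open>AB \<union> AC\<close>. Now exchange \<open>Y\<close> for \<open>S\<close> and move the vertices of \<open>XB\<close> reached from \<open>T3\<close> to the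
  \<open>R\<close>-side: the new \<open>B\<close>-side is 2-coloured by \<open>f\<close>, flipped on the \<open>T1\<close>-side of \<open>S\<close>, and every
  certificate of the old cut is one of the new cut.\<close>

section \<open>Reachability, boundaries and minimum separators\<close>

lemma reach_invariant:
  assumes "reach W E a b" and "P a"
    and "\<And>x y. P x \<Longrightarrow> x \<in> W \<Longrightarrow> y \<in> W \<Longrightarrow> E x y \<Longrightarrow> P y"
  shows "P b"
proof -
  have "(\<lambda>x y. x \<in> W \<and> y \<in> W \<and> E x y)\<^sup>*\<^sup>* a b"
    using assms(1) by (simp add: reach_def)
  then show ?thesis
    by (induction rule: rtranclp_induct) (use assms(2,3) in blast)+
qed

lemma reach_in: "reach W E a b \<Longrightarrow> b \<in> W"
  using reach_invariant[where P = "\<lambda>x. x \<in> W"] by (auto simp: reach_def)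

lemma reach_refl: "a \<in> W \<Longrightarrow> reach W E a a"
  by (simp add: reach_def)

lemma reach_step: "reach W E a b \<Longrightarrow> E b c \<Longrightarrow> c \<in> W \<Longrightarrow> reach W E a c"
  using reach_in[of W E a b] by (auto simp: reach_def intro: rtranclp.rtrancl_into_rtrancl)

lemma reach_trans: "reach W E a b \<Longrightarrow> reach W E b c \<Longrightarrow> reach W E a c"
  unfolding reach_def by (meson rtranclp_trans)

lemma reach_sym:
  assumes "\<And>x y. E x y \<Longrightarrow> E y x" and "reach W E a b"
  shows "reach W E b a"
proof -
  have "symp (\<lambda>x y. x \<in> W \<and> y \<in> W \<and> E x y)"
    using assms(1) by (auto intro: sympI)
  then show ?thesis
    using assms(2) reach_in[OF assms(2)] by (auto simp: reach_def dest: sympD[OF symp_rtranclp])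
qed

lemma reach_mono: "W \<subseteq> W' \<Longrightarrow> reach W E a b \<Longrightarrow> reach W' E a b"
  unfolding reach_def by (auto elim: rtranclp_mono[THEN predicate2D, rotated])

lemma reach_restrict:
  assumes "reach W E a b" and "\<And>x. reach W E a x \<Longrightarrow> x \<in> W'"
  shows "reach W' E a b"
  using reach_invariant[where P = "\<lambda>x. reach W E a x \<and> reach W' E a x", OF assms(1)]
    assms reach_refl reach_step by (metis reach_def)

lemma reach_exit:
  assumes "reach W E a b" and "P a" and "\<not> P b"
  obtains x y where "P x" and "\<not> P y" and "E x y" and "reach W E a y"
proof -
  let ?exit = "\<exists>x y. P x \<and> \<not> P y \<and> E x y \<and> reach W E a y"
  have "a \<in> W"
    using assms(1) by (simp add: reach_def)
  have "reach W E a b \<and> (P b \<or> ?exit)"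
  proof (rule reach_invariant[where P = "\<lambda>z. reach W E a z \<and> (P z \<or> ?exit)", OF assms(1)])
    show "reach W E a a \<and> (P a \<or> ?exit)"
      using \<open>a \<in> W\<close> assms(2) by (simp add: reach_refl)
    fix x y
    assume x: "reach W E a x \<and> (P x \<or> ?exit)" and "y \<in> W" and "E x y"
    then have "reach W E a y"
      using reach_step by fast
    then show "reach W E a y \<and> (P y \<or> ?exit)"
      using x \<open>E x y\<close> by blast
  qed
  then show ?thesis
    using assms(3) that by blast
qed

lemma separates_mono:
  "W' \<subseteq> W \<Longrightarrow> separates W E X A B \<Longrightarrow> separates W' E X A B"
  unfolding separates_def using reach_mono[of "W' - X" "W - X" E] by blast

lemma separates_sym:
  assumes "\<And>x y. E x y \<Longrightarrow> E y x"
  shows "separates W E X A B \<longleftrightarrow> separates W E X B A"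
  using reach_sym[of E, OF assms] unfolding separates_def by blast

definition boundary :: "'b set \<Rightarrow> ('b \<Rightarrow> 'b \<Rightarrow> bool) \<Rightarrow> 'b set \<Rightarrow> 'b set" where
  "boundary W E U = {w \<in> W - U. \<exists>u\<in>U. E u w}"

definition reachable_from :: "'b set \<Rightarrow> ('b \<Rightarrow> 'b \<Rightarrow> bool) \<Rightarrow> 'b set \<Rightarrow> 'b set \<Rightarrow> 'b set" where
  "reachable_from W E Q T = {b. \<exists>t\<in>T. reach (W - Q) E t b}"

definition min_separator :: "'b set \<Rightarrow> ('b \<Rightarrow> 'b \<Rightarrow> bool) \<Rightarrow> 'b set \<Rightarrow> 'b set \<Rightarrow> 'b set
    \<Rightarrow> 'b set \<Rightarrow> bool" where
  "min_separator W E D T1 T2 Q \<longleftrightarrow> Q \<subseteq> D \<and> separates W E Q T1 T2 \<and>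
     (\<forall>Q' \<subseteq> D. separates W E Q' T1 T2 \<longrightarrow> card Q \<le> card Q')"

lemma reach_avoiding_boundary_stays:
  assumes "x \<in> U" and "reach (W - boundary W E U) E x y"
  shows "y \<in> U"
  by (rule reach_invariant[where P = "\<lambda>y. y \<in> U", OF assms(2,1)]) (auto simp: boundary_def)

lemma boundary_separates:
  assumes "T1 \<subseteq> U" and "U \<inter> T2 = {}"
  shows "separates W E (boundary W E U) T1 T2"
  using assms reach_avoiding_boundary_stays[of _ U W E] unfolding separates_def by blast

lemma boundary_Un_subset: "boundary W E (U \<union> U') \<subseteq> boundary W E U \<union> boundary W E U'"
  and boundary_Int_subset: "boundary W E (U \<inter> U') \<subseteq> boundary W E U \<union> boundary W E U'"
  by (auto simp: boundary_def)

lemma boundary_subset_Un_boundary: "B \<subseteq> U \<Longrightarrow> boundary W E B \<subseteq> U \<union> boundary W E U"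
  by (auto simp: boundary_def)

lemma card_boundary_submodular:
  assumes "finite W"
  shows "card (boundary W E (U \<inter> U')) + card (boundary W E (U \<union> U'))
           \<le> card (boundary W E U) + card (boundary W E U')"
proof -
  let ?a = "boundary W E (U \<inter> U')" and ?b = "boundary W E (U \<union> U')"
  let ?c = "boundary W E U" and ?d = "boundary W E U'"
  have fin: "finite ?a" "finite ?b" "finite ?c" "finite ?d"
    using assms by (simp_all add: boundary_def)
  have "card ?a + card ?b = card (?a \<union> ?b) + card (?a \<inter> ?b)"
    using fin card_Un_Int by blast
  also have "\<dots> \<le> card (?c \<union> ?d) + card (?c \<inter> ?d)"
    using fin by (intro add_mono card_mono) (auto simp: boundary_def)
  also have "\<dots> = card ?c + card ?d"
    using fin card_Un_Int by metis
  finally show ?thesis .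
qed

lemma boundary_reachable_from_subset: "boundary W E (reachable_from W E Q T) \<subseteq> Q"
proof
  fix w assume "w \<in> boundary W E (reachable_from W E Q T)"
  then obtain t u where "w \<in> W" "t \<in> T" "reach (W - Q) E t u" "E u w"
    and "\<not> reach (W - Q) E t w"
    unfolding boundary_def reachable_from_def by blast
  then show "w \<in> Q"
    using reach_step[of "W - Q" E t u w] by blast
qed

lemma reachable_from_step:
  "x \<in> reachable_from W E Q T \<Longrightarrow> E x y \<Longrightarrow> y \<in> W - Q \<Longrightarrow> y \<in> reachable_from W E Q T"
  unfolding reachable_from_def using reach_step[of "W - Q" E] by blast

lemma subset_reachable_from: "T \<subseteq> W \<Longrightarrow> T \<inter> Q = {} \<Longrightarrow> T \<subseteq> reachable_from W E Q T"
  unfolding reachable_from_def using reach_refl[of _ "W - Q" E] by blast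

lemma reachable_from_disjoint:
  "separates W E Q T1 T2 \<Longrightarrow> reachable_from W E Q T1 \<inter> T2 = {}"
  unfolding separates_def reachable_from_def by blast

lemma reachable_from_boundary_disjoint:
  assumes "\<And>x y. E x y \<Longrightarrow> E y x" and "T \<inter> U = {}"
  shows "reachable_from W E (boundary W E U) T \<inter> U = {}"
proof -
  have "t \<in> U" if "reach (W - boundary W E U) E t u" "u \<in> U" for t u
    using reach_avoiding_boundary_stays[OF \<open>u \<in> U\<close> reach_sym[OF assms(1) that(1)]] .
  then show ?thesis
    using assms(2) unfolding reachable_from_def by blast
qed

lemma min_separator_sym:
  assumes "\<And>x y. E x y \<Longrightarrow> E y x"
  shows "min_separator W E D T1 T2 Q \<longleftrightarrow> min_separator W E D T2 T1 Q"
  unfolding min_separator_def using separates_sym[of E W, OF assms] by simp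

lemma boundary_reachable_from_min_separator:
  assumes "finite W" and "D \<subseteq> W" and "T1 \<subseteq> W" and "T1 \<inter> D = {}"
    and Q: "min_separator W E D T1 T2 Q"
  shows "boundary W E (reachable_from W E Q T1) = Q"
proof -
  let ?B = "boundary W E (reachable_from W E Q T1)"
  have sub: "?B \<subseteq> Q"
    by (rule boundary_reachable_from_subset)
  have QD: "Q \<subseteq> D" and sep: "separates W E Q T1 T2"
    and min: "\<And>Q'. Q' \<subseteq> D \<Longrightarrow> separates W E Q' T1 T2 \<Longrightarrow> card Q \<le> card Q'"
    using Q unfolding min_separator_def by auto
  have "T1 \<subseteq> reachable_from W E Q T1"
    using assms(3,4) QD by (intro subset_reachable_from) auto
  then have "separates W E ?B T1 T2"
    using reachable_from_disjoint[OF sep] by (rule boundary_separates)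
  then have "card Q \<le> card ?B"
    using sub QD by (intro min) auto
  moreover have "finite Q"
    using assms(1,2) QD by (meson finite_subset)
  ultimately show ?thesis
    using sub by (simp add: card_seteq)
qed

lemma min_separator_boundary_Un:
  assumes "finite W" and "D \<subseteq> W" and "T1 \<subseteq> W" and "T1 \<inter> D = {}"
    and Y: "min_separator W E D T1 T2 Y" and S: "min_separator W E D T1 T2 S"
  shows "min_separator W E D T1 T2
           (boundary W E (reachable_from W E Y T1 \<union> reachable_from W E S T1))"
proof -
  define A where "A = reachable_from W E Y T1"
  define B where "B = reachable_from W E S T1"
  have YD: "Y \<subseteq> D" and SD: "S \<subseteq> D"
    and sepY: "separates W E Y T1 T2" and sepS: "separates W E S T1 T2"
    and minY: "\<And>Q. Q \<subseteq> D \<Longrightarrow> separates W E Q T1 T2 \<Longrightarrow> card Y \<le> card Q"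
    and minS: "\<And>Q. Q \<subseteq> D \<Longrightarrow> separates W E Q T1 T2 \<Longrightarrow> card S \<le> card Q"
    using Y S unfolding min_separator_def by auto
  have bA: "boundary W E A = Y"
    unfolding A_def using assms(1-4) Y by (rule boundary_reachable_from_min_separator)
  have bB: "boundary W E B = S"
    unfolding B_def using assms(1-4) S by (rule boundary_reachable_from_min_separator)
  have "T1 \<subseteq> A" "T1 \<subseteq> B"
    unfolding A_def B_def using assms(3,4) YD SD by (intro subset_reachable_from; blast)+
  moreover have "A \<inter> T2 = {}" "B \<inter> T2 = {}"
    unfolding A_def B_def using sepY sepS by (simp_all add: reachable_from_disjoint)
  ultimately have sep_Int: "separates W E (boundary W E (A \<inter> B)) T1 T2"
    and sep_Un: "separates W E (boundary W E (A \<union> B)) T1 T2"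
    by (auto intro!: boundary_separates)
  have "boundary W E (A \<inter> B) \<subseteq> D" "boundary W E (A \<union> B) \<subseteq> D"
    using boundary_Int_subset[of W E A B] boundary_Un_subset[of W E A B] bA bB YD SD by auto
  moreover have "card Y \<le> card (boundary W E (A \<inter> B))"
    using calculation(1) sep_Int by (rule minY)
  moreover have "card S \<le> card Y"
    using YD sepY by (rule minS)
  moreover have "card (boundary W E (A \<inter> B)) + card (boundary W E (A \<union> B)) \<le> card Y + card S"
    using card_boundary_submodular[OF assms(1), of E A B] bA bB by simp
  ultimately have "card (boundary W E (A \<union> B)) \<le> card Q"
    if "Q \<subseteq> D" "separates W E Q T1 T2" for Q
    using minS[OF that] by linarith
  then show ?thesis
    unfolding min_separator_def A_def[symmetric] B_def[symmetric]
    using sep_Un \<open>boundary W E (A \<union> B) \<subseteq> D\<close> by blast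
qed

text \<open>Otherwise the boundary of the union of the \<open>T1\<close>-sides of \<open>Y\<close> and \<open>S\<close> is, by
  submodularity, a minimum separator through \<open>y\<close>, and a walk from \<open>T2\<close> to \<open>y\<close> around it
  avoids \<open>S\<close>.\<close>
lemma min_separator_vertex_reachable:
  assumes "finite W" and sym: "\<And>x y. E x y \<Longrightarrow> E y x"
    and "D \<subseteq> W" and "T1 \<subseteq> W" and "T2 \<subseteq> W" and "T1 \<inter> D = {}" and "T2 \<inter> D = {}"
    and Y: "min_separator W E D T1 T2 Y" and S: "min_separator W E D T1 T2 S"
    and "y \<in> Y" and "y \<notin> S"
  shows "\<exists>t \<in> T1 \<union> T2. reach (W - S) E t y"
proof (rule ccontr)
  assume unreachable: "\<not> (\<exists>t \<in> T1 \<union> T2. reach (W - S) E t y)"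
  define A where "A = reachable_from W E Y T1"
  define B where "B = reachable_from W E S T1"
  define S1 where "S1 = boundary W E (A \<union> B)"
  define C where "C = reachable_from W E S1 T2"
  have S1: "min_separator W E D T2 T1 S1"
    unfolding S1_def A_def B_def using min_separator_boundary_Un[OF assms(1,3,4,6) Y S]
    by (simp add: min_separator_sym[OF sym])
  have bA: "boundary W E A = Y"
    unfolding A_def using assms(1,3,4,6) Y by (rule boundary_reachable_from_min_separator)
  have bB: "boundary W E B = S"
    unfolding B_def using assms(1,3,4,6) S by (rule boundary_reachable_from_min_separator)
  have "y \<in> boundary W E A"
    using bA \<open>y \<in> Y\<close> by simp
  moreover have "y \<notin> B"
    using unreachable unfolding B_def reachable_from_def by blast
  ultimately have "y \<in> S1"
    unfolding S1_def boundary_def by blast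
  moreover have "boundary W E C = S1"
    unfolding C_def using assms(1,3,5,7) S1 by (rule boundary_reachable_from_min_separator)
  ultimately obtain t c where t: "t \<in> T2" and tc: "reach (W - S1) E t c" and "E c y"
    and "y \<in> W"
    unfolding boundary_def C_def reachable_from_def by blast
  have "T2 \<inter> (A \<union> B) = {}"
    using Y S unfolding A_def B_def min_separator_def
    by (auto dest: reachable_from_disjoint)
  then have "C \<inter> (A \<union> B) = {}"
    unfolding C_def S1_def using reachable_from_boundary_disjoint[of E T2 "A \<union> B" W] sym
    by blast
  moreover have "S \<subseteq> (A \<union> B) \<union> S1"
    unfolding S1_def bB[symmetric] by (rule boundary_subset_Un_boundary) blast
  ultimately have "reach (W - S) E t c"
    using reach_restrict[OF tc, of "W - S"] t reach_in[of "W - S1" E t]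
    unfolding C_def reachable_from_def by blast
  then have "reach (W - S) E t y"
    using \<open>E c y\<close> \<open>y \<in> W\<close> \<open>y \<notin> S\<close> by (auto intro: reach_step)
  then show False
    using t unreachable by blast
qed

section \<open>Two-colourings and odd cycle transversals\<close>

lemma proper_2col_subset: "proper_2col E U c \<Longrightarrow> U' \<subseteq> U \<Longrightarrow> proper_2col E U' c"
  unfolding proper_2col_def by blast

lemma proper_2col_if:
  assumes "\<And>u v. E u v \<Longrightarrow> E v u"
    and "proper_2col E (U \<inter> A) c1" and "proper_2col E (U - A) c2"
    and "\<And>u w. u \<in> U \<inter> A \<Longrightarrow> w \<in> U - A \<Longrightarrow> E u w \<Longrightarrow> c1 u \<noteq> c2 w"
  shows "proper_2col E U (\<lambda>x. if x \<in> A then c1 x else c2 x)"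
  using assms unfolding proper_2col_def by (metis DiffI IntI)

lemma oct_le:
  assumes "finite U" and "X \<subseteq> U" and "proper_2col E (U - X) c"
  shows "oct U E \<le> card X"
  unfolding oct_def bipartite_on_def using assms by (intro Min_le) auto

lemma oct_attained:
  assumes "finite U"
  obtains X where "X \<subseteq> U" and "bipartite_on E (U - X)" and "oct U E = card X"
proof -
  let ?M = "{card X | X. X \<subseteq> U \<and> bipartite_on E (U - X)}"
  have "bipartite_on E (U - U)"
    by (simp add: bipartite_on_def proper_2col_def)
  then have "Min ?M \<in> ?M"
    using assms by (intro Min_in) auto
  then show ?thesis
    using that unfolding oct_def by blast
qed

lemma oct_mono:
  assumes "finite U" and "VH \<subseteq> U" and "\<And>u v. EH u v \<Longrightarrow> E u v"
  shows "oct VH EH \<le> oct U E"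
proof -
  obtain X c where X: "X \<subseteq> U" "oct U E = card X" and c: "proper_2col E (U - X) c"
    using oct_attained[OF assms(1)] unfolding bipartite_on_def by metis
  have "proper_2col EH (VH - VH \<inter> X) c"
    using c assms(2,3) unfolding proper_2col_def by blast
  then have "oct VH EH \<le> card (VH \<inter> X)"
    using assms(1,2) finite_subset by (intro oct_le) auto
  also have "\<dots> \<le> card X"
    using X(1) assms(1) finite_subset by (intro card_mono) auto
  finally show ?thesis
    using X(2) by simp
qed

lemma component_subset: "component W E v \<subseteq> W"
  unfolding component_def using reach_in by fastforce

lemma component_closed: "x \<in> component W E v \<Longrightarrow> y \<in> W \<Longrightarrow> E x y \<Longrightarrow> y \<in> component W E v"
  unfolding component_def using reach_step by fastforce

text \<open>Exchanging \<open>Z1\<close> for \<open>Z2\<close> inside one component gives another odd cycle transversal.\<close>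
lemma optimal_oct_Int_component_le:
  assumes "finite VH" and sym: "\<And>x y. EH x y \<Longrightarrow> EH y x"
    and "oct VH EH = card Z1" and "finite Z1"
    and c1: "proper_2col EH (VH - Z1) c1" and c2: "proper_2col EH (VH - Z2) c2"
  shows "card (Z1 \<inter> component VH EH v) \<le> card (Z2 \<inter> component VH EH v)"
proof -
  define K where "K = component VH EH v"
  define Z where "Z = (Z1 \<inter> VH - K) \<union> (Z2 \<inter> K)"
  have "K \<subseteq> VH"
    unfolding K_def by (rule component_subset)
  then have ZV: "Z \<subseteq> VH"
    unfolding Z_def by blast
  have "proper_2col EH (VH - Z) (\<lambda>x. if x \<in> K then c2 x else c1 x)"
  proof (rule proper_2col_if[OF sym])
    show "proper_2col EH ((VH - Z) \<inter> K) c2"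
      using c2 by (rule proper_2col_subset) (auto simp: Z_def)
    show "proper_2col EH (VH - Z - K) c1"
      using c1 by (rule proper_2col_subset) (auto simp: Z_def)
    show "c2 u \<noteq> c1 w" if "u \<in> (VH - Z) \<inter> K" "w \<in> VH - Z - K" "EH u w" for u w
      using component_closed[of u VH EH v w] that unfolding K_def by blast
  qed
  then have "card Z1 \<le> card Z"
    using assms(3) oct_le[OF assms(1) ZV] by metis
  also have "\<dots> \<le> card (Z1 \<inter> VH - K) + card (Z2 \<inter> K)"
    unfolding Z_def by (rule card_Un_le)
  also have "\<dots> \<le> card (Z1 - K) + card (Z2 \<inter> K)"
    using assms(4) by (intro add_right_mono card_mono) auto
  finally have "card Z1 \<le> card (Z1 - K) + card (Z2 \<inter> K)" .
  moreover have "card Z1 = card (Z1 - K) + card (Z1 \<inter> K)"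
    using card_Int_Diff[OF assms(4), of K] by simp
  ultimately show ?thesis
    unfolding K_def by linarith
qed

section \<open>The auxiliary graph\<close>

definition aux_base :: "'a + 'a \<times> bool \<Rightarrow> 'a" where
  "aux_base = case_sum id fst"

lemma aux_base_simps [simp]: "aux_base (Inl u) = u" "aux_base (Inr (v, i)) = v"
  by (simp_all add: aux_base_def)

lemma aux_E_simps [simp]:
  "aux_E E XB XC f (Inl u) (Inl w) \<longleftrightarrow> u \<in> XB \<and> w \<in> XB \<and> E u w"
  "aux_E E XB XC f (Inr (v, i)) (Inl u) \<longleftrightarrow> i = f u \<and> v \<in> XC \<and> u \<in> XB \<and> E v u"
  "aux_E E XB XC f (Inl u) (Inr (v, i)) \<longleftrightarrow> i = f u \<and> v \<in> XC \<and> u \<in> XB \<and> E v u"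
  "\<not> aux_E E XB XC f (Inr p) (Inr q)"
  by (auto simp: aux_E_def)

lemma aux_E_sym: "(\<And>u v. E u v \<Longrightarrow> E v u) \<Longrightarrow> aux_E E XB XC f x y \<Longrightarrow> aux_E E XB XC f y x"
  unfolding aux_E_def by blast

lemma aux_E_base:
  "(\<And>u v. E u v \<Longrightarrow> E v u) \<Longrightarrow> aux_E E XB XC f x y \<Longrightarrow> E (aux_base x) (aux_base y)"
  unfolding aux_E_def by auto

section \<open>Two odd cycle cuts\<close>

locale occ_pair =
  fixes V :: "'a set" and E :: "'a \<Rightarrow> 'a \<Rightarrow> bool"
    and XB XC XR :: "'a set" and f :: "'a \<Rightarrow> bool"
    and AB AC AR :: "'a set" and g :: "'a \<Rightarrow> bool"
  assumes graph: "graph V E"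
    and X_OCC: "is_OCC V E XB XC XR" and f_2col: "proper_2col E XB f"
    and A_tight: "tight_OCC V E AB AC AR" and g_2col: "proper_2col E AB g"
begin

lemma finite_V: "finite V"
  and E_sym: "E u v \<Longrightarrow> E v u"
  and E_in_V: "E u v \<Longrightarrow> v \<in> V"
  using graph unfolding graph_def by blast+

lemma X_cover: "XB \<union> XC \<union> XR = V"
  and XB_XR_no_edge: "u \<in> XB \<Longrightarrow> v \<in> XR \<Longrightarrow> \<not> E u v"
  using X_OCC unfolding is_OCC_def by blast+

lemma A_cover: "AB \<union> AC \<union> AR = V"
  and A_disjoint: "AB \<inter> AC = {}" "AB \<inter> AR = {}" "AC \<inter> AR = {}"
  and AB_AR_no_edge: "u \<in> AB \<Longrightarrow> v \<in> AR \<Longrightarrow> \<not> E u v"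
  and AC_tight: "card AC = oct (AB \<union> AC) E"
  using A_tight unfolding tight_OCC_def is_OCC_def by blast+

lemma f_neq: "u \<in> XB \<Longrightarrow> w \<in> XB \<Longrightarrow> E u w \<Longrightarrow> f u \<noteq> f w"
  and g_neq: "u \<in> AB \<Longrightarrow> w \<in> AB \<Longrightarrow> E u w \<Longrightarrow> g u \<noteq> g w"
  using f_2col g_2col unfolding proper_2col_def by blast+

lemma finite_XB: "finite XB" and finite_XC: "finite XC"
  and finite_AB: "finite AB" and finite_AC: "finite AC"
  using finite_V X_cover A_cover by (auto intro: finite_subset)

lemma XB_neighbour_in_XC: "u \<in> XB \<Longrightarrow> E u v \<Longrightarrow> v \<notin> XB \<Longrightarrow> v \<in> XC"
  using E_in_V X_cover XB_XR_no_edge by blast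

lemma tight_card_le: "Z \<subseteq> AB \<union> AC \<Longrightarrow> proper_2col E (AB \<union> AC - Z) c \<Longrightarrow> card AC \<le> card Z"
  using AC_tight oct_le[of "AB \<union> AC" Z E c] finite_AB finite_AC by simp

definition Y :: "'a set" where
  "Y = AC \<inter> XB"

definition T1 :: "('a + 'a \<times> bool) set" where
  "T1 = (\<lambda>v. Inr (v, g v)) ` (XC \<inter> AB)"

definition T2 :: "('a + 'a \<times> bool) set" where
  "T2 = (\<lambda>v. Inr (v, \<not> g v)) ` (XC \<inter> AB)"

definition T3 :: "('a + 'a \<times> bool) set" where
  "T3 = Inr ` ((XC \<inter> AR) \<times> UNIV)"

definition TX :: "('a + 'a \<times> bool) set" where
  "TX = Inr ` ((XC \<inter> AC) \<times> UNIV)"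

abbreviation Eaux :: "'a + 'a \<times> bool \<Rightarrow> 'a + 'a \<times> bool \<Rightarrow> bool" where
  "Eaux \<equiv> aux_E E XB XC f"

definition Waux :: "('a + 'a \<times> bool) set" where
  "Waux = aux_V XB XC - TX"

definition AXB :: "'a set" where
  "AXB = (AB \<union> AC) \<inter> XB"

definition Wcut :: "('a + 'a \<times> bool) set" where
  "Wcut = Inl ` AXB \<union> T1 \<union> T2"

lemma terminal_simps [simp]:
  "Inr (v, i) \<in> T1 \<longleftrightarrow> v \<in> XC \<and> v \<in> AB \<and> i = g v"
  "Inr (v, i) \<in> T2 \<longleftrightarrow> v \<in> XC \<and> v \<in> AB \<and> i = (\<not> g v)"
  "Inr (v, i) \<in> T3 \<longleftrightarrow> v \<in> XC \<and> v \<in> AR"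
  "Inr (v, i) \<in> TX \<longleftrightarrow> v \<in> XC \<and> v \<in> AC"
  "Inl u \<notin> T1" "Inl u \<notin> T2" "Inl u \<notin> T3" "Inl u \<notin> TX"
  by (auto simp: T1_def T2_def T3_def TX_def)

lemma Waux_simps [simp]:
  "Inl u \<in> Waux \<longleftrightarrow> u \<in> XB"
  "Inr (v, i) \<in> Waux \<longleftrightarrow> v \<in> XC \<and> v \<notin> AC"
  by (auto simp: Waux_def aux_V_def)

lemma Wcut_simps [simp]:
  "Inl u \<in> Wcut \<longleftrightarrow> u \<in> AXB"
  "Inr (v, i) \<in> Wcut \<longleftrightarrow> v \<in> XC \<and> v \<in> AB"
  by (auto simp: Wcut_def)

lemma Wcut_subset_Waux: "Wcut \<subseteq> Waux"
  using A_disjoint by (auto simp: Wcut_def T1_def T2_def AXB_def)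

lemma Y_subset: "Y \<subseteq> AXB" "Y \<subseteq> XB"
  by (auto simp: Y_def AXB_def)

lemma AC_diff_Y: "AC - Y = AC - XB"
  by (auto simp: Y_def)

lemma card_AC_split: "card AC = card (AC - Y) + card Y"
  using card_Int_Diff[OF finite_AC, of XB] unfolding AC_diff_Y by (simp add: Y_def)

lemma Eaux_sym: "Eaux x y \<Longrightarrow> Eaux y x"
  using aux_E_sym[of E XB XC f x y] E_sym by blast

lemma Eaux_base: "Eaux x y \<Longrightarrow> E (aux_base x) (aux_base y)"
  using aux_E_base[of E XB XC f x y] E_sym by blast

lemma Eaux_reach_sym: "reach W Eaux a b \<Longrightarrow> reach W Eaux b a"
  using reach_sym[of Eaux W a b] Eaux_sym by blast

text \<open>Walks in \<open>G_aux - TX\<close> avoiding \<open>Y\<close> cannot leave the part above \<open>AB\<close>, and there whether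
  \<open>f\<close> and \<open>g\<close> disagree is preserved: both change along edges inside \<open>XB\<close>, and \<open>u\<close> is joined
  to the copy \<open>v^(f u)\<close>.\<close>
definition side :: "bool \<Rightarrow> 'a + 'a \<times> bool \<Rightarrow> bool" where
  "side p x \<longleftrightarrow> aux_base x \<in> AB \<and> (case x of Inl u \<Rightarrow> f u \<noteq> g u | Inr (v, i) \<Rightarrow> i = g v) = p"

lemma side_step:
  assumes "side p x" and "y \<in> Waux - Inl ` Y" and "Eaux x y"
  shows "side p y"
proof -
  have "aux_base x \<in> AB"
    using assms(1) by (simp add: side_def)
  moreover have "E (aux_base x) (aux_base y)"
    using Eaux_base[OF assms(3)] .
  moreover have "aux_base y \<notin> AC"
    using assms(2) by (cases y) (auto simp: Y_def)
  ultimately have "aux_base y \<in> AB"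
    using E_in_V A_cover AB_AR_no_edge by blast
  moreover have "(case y of Inl u \<Rightarrow> f u \<noteq> g u | Inr (v, i) \<Rightarrow> i = g v) = p"
    using assms(1,3) \<open>aux_base x \<in> AB\<close> \<open>aux_base y \<in> AB\<close>
    by (auto simp: side_def aux_E_def dest: f_neq g_neq E_sym)
  ultimately show ?thesis
    by (simp add: side_def)
qed

lemma Y_sep3: "sep3 E XB XC f T1 T2 T3 TX Y"
proof -
  have no_walk: "\<not> reach (Waux - Inl ` Y) Eaux a b" if "side p a" "\<not> side p b" for p a b
    using reach_invariant[where P = "side p"] side_step that by blast
  have "side True t" "\<not> side False t" if "t \<in> T1" for t
    using that by (auto simp: T1_def side_def)
  moreover have "side False t" "\<not> side True t" if "t \<in> T2" for t
    using that by (auto simp: T2_def side_def)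
  moreover have "\<not> side p t" if "t \<in> T3" for p t
    using that A_disjoint by (auto simp: T3_def side_def)
  ultimately show ?thesis
    unfolding sep3_def Let_def Waux_def[symmetric] separates_def using no_walk by metis
qed

lemma card_Y_le_card_aux_T: "card Y \<le> card (aux_T XC)"
proof -
  define Z where "Z = (AC - Y) \<union> (XC \<inter> AB)"
  have "proper_2col E (AB \<union> AC - Z) (\<lambda>u. if u \<in> XB then f u else g u)"
  proof (rule proper_2col_if[OF E_sym])
    show "proper_2col E ((AB \<union> AC - Z) \<inter> XB) f"
      using f_2col by (rule proper_2col_subset) blast
    show "proper_2col E (AB \<union> AC - Z - XB) g"
      using g_2col by (rule proper_2col_subset) (auto simp: Z_def Y_def)
    show "f u \<noteq> g w" if "u \<in> (AB \<union> AC - Z) \<inter> XB" "w \<in> AB \<union> AC - Z - XB" "E u w" for u w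
      using that XB_neighbour_in_XC by (auto simp: Z_def Y_def)
  qed
  then have "card AC \<le> card Z"
    by (intro tight_card_le) (auto simp: Z_def)
  also have "\<dots> \<le> card (AC - Y) + card (XC \<inter> AB)"
    unfolding Z_def by (rule card_Un_le)
  finally have "card AC \<le> card (AC - Y) + card (XC \<inter> AB)" .
  then have "card Y \<le> card (XC \<inter> AB)"
    using card_AC_split by linarith
  also have "\<dots> \<le> card XC"
    using finite_XC by (intro card_mono) auto
  also have "\<dots> = card ((\<lambda>v. Inr (v, True)) ` XC :: ('a + 'a \<times> bool) set)"
    by (simp add: card_image inj_on_def)
  also have "\<dots> \<le> card (aux_T XC)"
    using finite_XC by (intro card_mono) (auto simp: aux_T_def)
  finally show ?thesis .
qed

lemma terminals_partition:
  "T1 \<union> T2 \<union> T3 \<union> TX = aux_T XC \<and> T1 \<inter> T2 = {} \<and> T1 \<inter> T3 = {} \<and> T1 \<inter> TX = {} \<and>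
   T2 \<inter> T3 = {} \<and> T2 \<inter> TX = {} \<and> T3 \<inter> TX = {}"
proof -
  have "(x \<in> T1 \<union> T2 \<union> T3 \<union> TX \<longleftrightarrow> x \<in> aux_T XC) \<and>
    x \<notin> T1 \<inter> T2 \<and> x \<notin> T1 \<inter> T3 \<and> x \<notin> T1 \<inter> TX \<and> x \<notin> T2 \<inter> T3 \<and> x \<notin> T2 \<inter> TX \<and>
    x \<notin> T3 \<inter> TX" for x
  proof (cases x)
    case (Inl u)
    then show ?thesis
      by (auto simp: aux_T_def)
  next
    case (Inr p)
    then obtain v i where "x = Inr (v, i)"
      by (cases p) auto
    then show ?thesis
      using X_cover A_cover A_disjoint by (auto simp: aux_T_def)
  qed
  then show ?thesis
    by blast
qed

text \<open>\<open>Inl u\<close> is adjacent to the terminal \<open>Inr (w, f u)\<close>, which is in \<open>T1\<close> iff \<open>f u = g w\<close>.\<close>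
lemma T1_side_iff:
  assumes "T1 \<union> T2 \<subseteq> W" and sep: "separates W Eaux (Inl ` Q) T1 T2"
    and u: "u \<in> XB" "Inl u \<in> W - Inl ` Q" and w: "w \<in> XC \<inter> AB" and "E u w"
  shows "Inl u \<in> reachable_from W Eaux (Inl ` Q) T1 \<longleftrightarrow> f u = g w"
proof -
  let ?W = "W - Inl ` Q"
  define p where "p = (Inr (w, f u) :: 'a + 'a \<times> bool)"
  have "p \<in> T1 \<union> T2"
    using w by (cases "f u = g w") (auto simp: p_def)
  then have "p \<in> ?W"
    using assms(1) by (auto simp: p_def)
  moreover have "Eaux p (Inl u)"
    using w u E_sym[OF \<open>E u w\<close>] by (simp add: p_def)
  ultimately have pu: "reach ?W Eaux p (Inl u)"
    using reach_refl reach_step u(2) by metis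
  show ?thesis
  proof (cases "f u = g w")
    case True
    then have "p \<in> T1"
      using w by (simp add: p_def)
    then show ?thesis
      using pu True unfolding reachable_from_def by blast
  next
    case False
    then have "p \<in> T2"
      using w by (simp add: p_def)
    then show ?thesis
      using False sep reach_trans[OF _ Eaux_reach_sym[OF pu]]
      unfolding reachable_from_def separates_def by blast
  qed
qed

lemma proper_2col_separator:
  assumes "T1 \<union> T2 \<subseteq> W" and sep: "separates W Eaux (Inl ` Q) T1 T2"
    and W: "\<And>u. u \<in> U \<inter> XB \<Longrightarrow> Inl u \<in> W - Inl ` Q" and "U - XB \<subseteq> AB"
  shows "proper_2col E U
           (\<lambda>u. if u \<in> XB then f u \<noteq> (Inl u \<in> reachable_from W Eaux (Inl ` Q) T1) else g u)"
proof (rule proper_2col_if[OF E_sym])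
  let ?R = "reachable_from W Eaux (Inl ` Q) T1"
  show "proper_2col E (U \<inter> XB) (\<lambda>u. f u \<noteq> (Inl u \<in> ?R))"
    unfolding proper_2col_def
  proof (intro ballI impI)
    fix u w assume u: "u \<in> U \<inter> XB" and w: "w \<in> U \<inter> XB" and "E u w"
    then have "Eaux (Inl u) (Inl w)" and "Eaux (Inl w) (Inl u)"
      using E_sym by auto
    then have "Inl u \<in> ?R \<longleftrightarrow> Inl w \<in> ?R"
      using W[OF u] W[OF w] reachable_from_step by metis
    then show "(f u \<noteq> (Inl u \<in> ?R)) \<noteq> (f w \<noteq> (Inl w \<in> ?R))"
      using f_neq u w \<open>E u w\<close> by auto
  qed
  show "proper_2col E (U - XB) g"
    using g_2col assms(4) by (rule proper_2col_subset)
  fix u w assume u: "u \<in> U \<inter> XB" and w: "w \<in> U - XB" and "E u w"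
  then have "w \<in> XC \<inter> AB"
    using XB_neighbour_in_XC assms(4) by blast
  then show "(f u \<noteq> (Inl u \<in> ?R)) \<noteq> g w"
    using T1_side_iff[OF assms(1,2) _ W[OF u] _ \<open>E u w\<close>] u by auto
qed

text \<open>Otherwise \<open>(AC - Y) \<union> Q\<close> would be a smaller odd cycle transversal of \<open>G[AB \<union> AC]\<close>.\<close>
lemma card_Y_le_separator:
  assumes "Q \<subseteq> AXB" and "separates Wcut Eaux (Inl ` Q) T1 T2"
  shows "card Y \<le> card Q"
proof -
  define Z where "Z = (AC - Y) \<union> Q"
  have "proper_2col E (AB \<union> AC - Z)
      (\<lambda>u. if u \<in> XB then f u \<noteq> (Inl u \<in> reachable_from Wcut Eaux (Inl ` Q) T1) else g u)"
    by (rule proper_2col_separator[OF _ assms(2)]) (auto simp: Z_def Y_def AXB_def Wcut_def)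
  then have "card AC \<le> card Z"
    using assms(1) by (intro tight_card_le) (auto simp: Z_def AXB_def)
  also have "\<dots> \<le> card (AC - Y) + card Q"
    unfolding Z_def by (rule card_Un_le)
  finally show ?thesis
    using card_AC_split by linarith
qed

lemma min_separator_Wcut:
  assumes "Q \<subseteq> AXB" and "separates Wcut Eaux (Inl ` Q) T1 T2" and "card Q \<le> card Y"
  shows "min_separator Wcut Eaux (Inl ` AXB) T1 T2 (Inl ` Q)"
  unfolding min_separator_def
proof (intro conjI allI impI)
  show "Inl ` Q \<subseteq> Inl ` AXB" and "separates Wcut Eaux (Inl ` Q) T1 T2"
    using assms(1,2) by auto
  fix Q' assume "Q' \<subseteq> Inl ` AXB" and "separates Wcut Eaux Q' T1 T2"
  moreover obtain Q0 where "Q' = Inl ` Q0"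
    by (metis \<open>Q' \<subseteq> Inl ` AXB\<close> subset_image_iff)
  ultimately have "card Y \<le> card Q'"
    using card_Y_le_separator[of Q0] by (auto simp: card_image)
  then show "card (Inl ` Q) \<le> card Q'"
    using assms(3) by (simp add: card_image)
qed

lemma star_property_separator:
  assumes "star_property E XB XC f Bs"
  obtains S where "S \<subseteq> Bs" and "S \<subseteq> XB" and "sep3 E XB XC f T1 T2 T3 TX S"
    and "card S \<le> card Y"
proof -
  have "\<exists>S. S \<subseteq> XB \<and> card S \<le> card (aux_T XC) \<and> sep3 E XB XC f T1 T2 T3 TX S"
    using Y_subset(2) Y_sep3 card_Y_le_card_aux_T by blast
  then obtain S where "S \<subseteq> Bs" and S: "sep3 E XB XC f T1 T2 T3 TX S"
    and min: "\<forall>S'. S' \<subseteq> XB \<and> sep3 E XB XC f T1 T2 T3 TX S' \<longrightarrow> card S \<le> card S'"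
    using assms[unfolded star_property_def, THEN conjunct2, rule_format, OF terminals_partition]
    by blast
  moreover have "S \<subseteq> XB"
    using \<open>S \<subseteq> Bs\<close> assms by (auto simp: star_property_def)
  moreover have "card S \<le> card Y"
    using min Y_subset(2) Y_sep3 by blast
  ultimately show ?thesis
    using that by blast
qed

end

locale occ_exchange = occ_pair +
  fixes S :: "'a set"
  assumes S_XB: "S \<subseteq> XB" and S_sep3: "sep3 E XB XC f T1 T2 T3 TX S"
    and card_S_le: "card S \<le> card Y" and Y_nonempty: "Y \<noteq> {}"
begin

lemma S_sep12: "separates Waux Eaux (Inl ` S) T1 T2"
  and S_sep13: "separates Waux Eaux (Inl ` S) T1 T3"
  and S_sep23: "separates Waux Eaux (Inl ` S) T2 T3"
  using S_sep3 unfolding sep3_def Let_def Waux_def by auto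

lemma T3_T12_unreachable:
  assumes "t \<in> T3" and "t' \<in> T1 \<union> T2"
  shows "\<not> reach (Waux - Inl ` S) Eaux t t'"
  using S_sep13 S_sep23 assms Eaux_reach_sym[of "Waux - Inl ` S" t t']
  unfolding separates_def by blast

lemma S_subset_AXB: "S \<subseteq> AXB" and card_S: "card S = card Y"
proof -
  have "Wcut - Inl ` (S \<inter> AXB) = Wcut - Inl ` S"
    by (auto simp: Wcut_def)
  then have "separates Wcut Eaux (Inl ` (S \<inter> AXB)) T1 T2"
    using separates_mono[OF Wcut_subset_Waux S_sep12] by (simp add: separates_def)
  then have "card Y \<le> card (S \<inter> AXB)"
    by (intro card_Y_le_separator) auto
  moreover have "finite S"
    using S_XB finite_XB by (rule finite_subset)
  ultimately have "card (S \<inter> AXB) = card S" and "card S = card Y"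
    using card_S_le card_mono[of S "S \<inter> AXB"] by auto
  then show "S \<subseteq> AXB" and "card S = card Y"
    using card_subset_eq[OF \<open>finite S\<close>, of "S \<inter> AXB"] by auto
qed

lemma Y_reachable:
  assumes "y \<in> Y" and "y \<notin> S"
  shows "\<exists>t \<in> T1 \<union> T2. reach (Waux - Inl ` S) Eaux t (Inl y)"
proof -
  have "finite Wcut"
    using finite_XB finite_XC by (simp add: Wcut_def AXB_def T1_def T2_def)
  moreover have "separates Wcut Eaux (Inl ` Y) T1 T2"
    using separates_mono[OF Wcut_subset_Waux] Y_sep3
    unfolding sep3_def Let_def Waux_def by blast
  then have "min_separator Wcut Eaux (Inl ` AXB) T1 T2 (Inl ` Y)"
    using Y_subset by (intro min_separator_Wcut) auto
  moreover have "min_separator Wcut Eaux (Inl ` AXB) T1 T2 (Inl ` S)"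
    using S_subset_AXB separates_mono[OF Wcut_subset_Waux S_sep12] card_S
    by (intro min_separator_Wcut) auto
  ultimately have "\<exists>t \<in> T1 \<union> T2. reach (Wcut - Inl ` S) Eaux t (Inl y)"
    using assms by (intro min_separator_vertex_reachable[OF _ Eaux_sym])
      (auto simp: Wcut_def)
  then show ?thesis
    using reach_mono[of "Wcut - Inl ` S" "Waux - Inl ` S"] Wcut_subset_Waux by blast
qed

text \<open>A walk from \<open>T3\<close> into \<open>AB \<union> AC\<close> must leave the part above \<open>AR\<close> through a vertex of \<open>Y\<close>,
  which is reachable from \<open>T1 \<union> T2\<close>.\<close>
lemma T3_AXB_unreachable:
  assumes "u \<in> AXB" and "u \<notin> S" and "t \<in> T3"
  shows "\<not> reach (Waux - Inl ` S) Eaux t (Inl u)"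
proof
  assume "reach (Waux - Inl ` S) Eaux t (Inl u)"
  moreover have "aux_base t \<in> AR" and "aux_base (Inl u) \<notin> AR"
    using assms A_disjoint by (auto simp: T3_def AXB_def)
  ultimately obtain x y where "aux_base x \<in> AR" and "aux_base y \<notin> AR" and "Eaux x y"
    and ty: "reach (Waux - Inl ` S) Eaux t y"
    by (rule reach_exit[where P = "\<lambda>x. aux_base x \<in> AR"])
  then have "E (aux_base x) (aux_base y)"
    using Eaux_base by blast
  then have "aux_base y \<in> AC"
    using \<open>aux_base x \<in> AR\<close> \<open>aux_base y \<notin> AR\<close> E_in_V A_cover AB_AR_no_edge E_sym
    by blast
  moreover have "y \<in> Waux - Inl ` S"
    using ty by (rule reach_in)
  ultimately obtain w where "y = Inl w" and "w \<in> Y" and "w \<notin> S"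
    by (cases y) (auto simp: Y_def)
  then obtain t' where "t' \<in> T1 \<union> T2" and "reach (Waux - Inl ` S) Eaux t' y"
    using Y_reachable by blast
  then show False
    using T3_T12_unreachable[OF assms(3)] reach_trans[OF ty Eaux_reach_sym] by blast
qed

definition R3 :: "'a set" where
  "R3 = {u. Inl u \<in> reachable_from Waux Eaux (Inl ` S) T3}"

definition AB' :: "'a set" where
  "AB' = (AB - XB) \<union> (XB - S - R3)"

definition AC' :: "'a set" where
  "AC' = (AC - XB) \<union> S"

definition AR' :: "'a set" where
  "AR' = (AR - XB) \<union> R3"

lemma R3_subset: "R3 \<subseteq> XB - S"
proof
  fix u assume "u \<in> R3"
  then obtain t where "reach (Waux - Inl ` S) Eaux t (Inl u)"
    unfolding R3_def reachable_from_def by blast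
  then have "Inl u \<in> Waux - Inl ` S"
    by (rule reach_in)
  then show "u \<in> XB - S"
    by auto
qed

lemma R3_T3_neighbour:
  assumes "v \<in> XC \<inter> AR" and "u \<in> XB - S" and "E v u"
  shows "u \<in> R3"
proof -
  have "Inr (v, f u) \<in> Waux - Inl ` S"
    using assms(1) A_disjoint by auto
  moreover have "Inr (v, f u) \<in> T3"
    using assms(1) by simp
  ultimately have "Inr (v, f u) \<in> reachable_from Waux Eaux (Inl ` S) T3"
    unfolding reachable_from_def using reach_refl[of "Inr (v, f u)"] by blast
  moreover have "Eaux (Inr (v, f u)) (Inl u)" and "Inl u \<in> Waux - Inl ` S"
    using assms by auto
  ultimately show ?thesis
    unfolding R3_def by (blast intro: reachable_from_step)
qed

lemma AB'_2col: "proper_2col E AB'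
    (\<lambda>u. if u \<in> XB then f u \<noteq> (Inl u \<in> reachable_from Waux Eaux (Inl ` S) T1) else g u)"
proof (rule proper_2col_separator[OF _ S_sep12])
  show "T1 \<union> T2 \<subseteq> Waux"
    using A_disjoint by (auto simp: T1_def T2_def)
  show "Inl u \<in> Waux - Inl ` S" if "u \<in> AB' \<inter> XB" for u
    using that by (auto simp: AB'_def)
  show "AB' - XB \<subseteq> AB"
    by (auto simp: AB'_def)
qed

lemma AB'_AR'_no_edge:
  assumes "u \<in> AB'" and "v \<in> AR'"
  shows "\<not> E u v"
proof
  assume "E u v"
  show False
  proof (cases "u \<in> XB")
    case True
    then have "u \<in> XB - S" "u \<notin> R3"
      using assms(1) by (auto simp: AB'_def)
    show False
    proof (cases "v \<in> R3")
      case True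
      then have "Inl v \<in> reachable_from Waux Eaux (Inl ` S) T3" and "Eaux (Inl v) (Inl u)"
        using \<open>u \<in> XB - S\<close> E_sym[OF \<open>E u v\<close>] R3_subset by (auto simp: R3_def)
      then have "u \<in> R3"
        using \<open>u \<in> XB - S\<close> unfolding R3_def by (auto intro: reachable_from_step)
      then show False
        using \<open>u \<notin> R3\<close> by blast
    next
      case False
      then have "v \<in> AR - XB"
        using assms(2) by (auto simp: AR'_def)
      then have "v \<in> XC \<inter> AR"
        using XB_neighbour_in_XC \<open>u \<in> XB\<close> \<open>E u v\<close> by blast
      then show False
        using R3_T3_neighbour \<open>u \<in> XB - S\<close> \<open>u \<notin> R3\<close> E_sym[OF \<open>E u v\<close>] by blast
    qed
  next
    case False
    then have "u \<in> AB"
      using assms(1) by (auto simp: AB'_def)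
    show False
    proof (cases "v \<in> R3")
      case True
      then obtain t where "t \<in> T3" and tv: "reach (Waux - Inl ` S) Eaux t (Inl v)"
        and "v \<in> XB"
        using R3_subset unfolding R3_def reachable_from_def by blast
      then have "u \<in> XC"
        using XB_neighbour_in_XC E_sym[OF \<open>E u v\<close>] \<open>u \<notin> XB\<close> by blast
      then have "Inr (u, f v) \<in> T1 \<union> T2" and "Inr (u, f v) \<in> Waux - Inl ` S"
        using \<open>u \<in> AB\<close> A_disjoint by auto
      moreover have "Eaux (Inl v) (Inr (u, f v))"
        using \<open>u \<in> XC\<close> \<open>v \<in> XB\<close> \<open>E u v\<close> by simp
      ultimately show False
        using T3_T12_unreachable[OF \<open>t \<in> T3\<close>] reach_step[OF tv] by blast
    next
      case False
      then show False
        using assms(2) \<open>u \<in> AB\<close> \<open>E u v\<close> AB_AR_no_edge by (auto simp: AR'_def)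
    qed
  qed
qed

lemma AB'_AC'_AR'_OCC: "is_OCC V E AB' AC' AR'"
  unfolding is_OCC_def
proof (intro conjI)
  show "AB' \<union> AC' \<union> AR' = V"
    using X_cover A_cover S_XB R3_subset by (auto simp: AB'_def AC'_def AR'_def)
  show "AB' \<inter> AC' = {}" "AB' \<inter> AR' = {}" "AC' \<inter> AR' = {}"
    using A_disjoint R3_subset S_XB by (auto simp: AB'_def AC'_def AR'_def)
  show "bipartite_on E AB'"
    unfolding bipartite_on_def using AB'_2col by blast
  show "\<forall>u\<in>AB'. \<forall>v\<in>AR'. \<not> E u v"
    using AB'_AR'_no_edge by blast
  have "S \<noteq> {}"
    using card_S Y_nonempty finite_subset[OF Y_subset(2) finite_XB] by auto
  then show "AB' \<union> AC' \<noteq> {}"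
    by (auto simp: AC'_def)
qed

lemma card_AC': "card AC' = card AC"
proof -
  have "card AC' = card (AC - XB) + card S"
    unfolding AC'_def using S_XB finite_AC finite_subset[OF S_XB finite_XB]
    by (intro card_Un_disjoint) auto
  then show ?thesis
    using card_S card_AC_split AC_diff_Y by simp
qed

lemma AB_AC_diff_AC'_subset: "AB \<union> AC - AC' \<subseteq> AB'"
proof
  fix x assume x: "x \<in> AB \<union> AC - AC'"
  show "x \<in> AB'"
  proof (cases "x \<in> XB")
    case True
    then have "x \<in> AXB" and "x \<notin> S"
      using x by (auto simp: AXB_def AC'_def)
    then have "x \<notin> R3"
      using T3_AXB_unreachable unfolding R3_def reachable_from_def by blast
    then show ?thesis
      using True \<open>x \<notin> S\<close> by (simp add: AB'_def)
  next
    case False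
    then show ?thesis
      using x by (auto simp: AB'_def AC'_def)
  qed
qed

text \<open>\<open>AC'\<close> is another optimal odd cycle transversal of the certificate, hence no larger than
  \<open>AC\<close> inside any of its components.\<close>
lemma certificate_exchange:
  assumes sub: "subgraph_of VH EH V E (AB \<union> AC)" and cert: "certificate VH EH AC z"
  shows "subgraph_of VH EH V E (AB' \<union> AC')" and "certificate VH EH AC' z"
proof -
  have VH: "VH \<subseteq> AB \<union> AC" and EH_E: "\<And>u v. EH u v \<Longrightarrow> E u v"
    and EH_sym: "\<And>u v. EH u v \<Longrightarrow> EH v u" and EH_in: "\<And>u v. EH u v \<Longrightarrow> u \<in> VH \<and> v \<in> VH"
    using sub unfolding subgraph_of_def by blast+
  have VH': "VH - AC' \<subseteq> AB'"
    using VH AB_AC_diff_AC'_subset by blast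
  have "AB' \<union> AC' \<subseteq> V"
    using AB'_AC'_AR'_OCC unfolding is_OCC_def by blast
  then show "subgraph_of VH EH V E (AB' \<union> AC')"
    using VH' EH_E EH_sym EH_in unfolding subgraph_of_def by blast
  have "finite VH"
    using VH finite_AB finite_AC finite_subset by blast
  have "finite AC'"
    using finite_AC finite_subset[OF S_XB finite_XB] by (simp add: AC'_def)
  have oct: "oct VH EH = card AC'"
    using cert card_AC' by (simp add: certificate_def)
  obtain c where "proper_2col E AB' c"
    using AB'_2col by blast
  then have c: "proper_2col EH (VH - AC') c"
    using VH' EH_E unfolding proper_2col_def by blast
  obtain c2 where c2: "proper_2col EH (VH - AC) c2"
    using cert unfolding certificate_def bipartite_on_def by blast
  have "card (AC' \<inter> component VH EH v) \<le> z" if "v \<in> VH" for v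
    using optimal_oct_Int_component_le[OF \<open>finite VH\<close> EH_sym oct \<open>finite AC'\<close> c c2, of v]
      cert that unfolding certificate_def by fastforce
  then show "certificate VH EH AC' z"
    using c oct unfolding certificate_def bipartite_on_def by blast
qed

lemma z_tight_exchange:
  assumes "z_tight_OCC V E z AB AC AR"
  shows "z_tight_OCC V E z AB' AC' AR'"
proof -
  obtain VH EH where sub: "subgraph_of VH EH V E (AB' \<union> AC')" and cert: "certificate VH EH AC' z"
    using assms certificate_exchange unfolding z_tight_OCC_def by blast
  have "finite (AB' \<union> AC')"
    using AB'_AC'_AR'_OCC finite_V finite_subset unfolding is_OCC_def by blast
  moreover have "proper_2col E (AB' \<union> AC' - AC') (\<lambda>u. if u \<in> XB then
      f u \<noteq> (Inl u \<in> reachable_from Waux Eaux (Inl ` S) T1) else g u)"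
    using AB'_2col by (rule proper_2col_subset) blast
  ultimately have "oct (AB' \<union> AC') E \<le> card AC'"
    by (intro oct_le) auto
  moreover have "card AC' = oct VH EH"
    using cert by (simp add: certificate_def)
  moreover have "oct VH EH \<le> oct (AB' \<union> AC') E"
    using sub \<open>finite (AB' \<union> AC')\<close> by (intro oct_mono) (auto simp: subgraph_of_def)
  ultimately show ?thesis
    using AB'_AC'_AR'_OCC sub cert unfolding z_tight_OCC_def tight_OCC_def by auto
qed

end

theorem lemma5p1:
  fixes V :: "'a set" and E :: "'a \<Rightarrow> 'a \<Rightarrow> bool" and z :: nat
    and XB XC XR AB AC AR Bs :: "'a set" and f :: "'a \<Rightarrow> bool"
  assumes "graph V E"
    and "is_OCC V E XB XC XR"
    and "proper_2col E XB f"
    and "star_property E XB XC f Bs"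
    and "z_tight_OCC V E z AB AC AR"
  shows "\<exists>AB' AC' AR'. z_tight_OCC V E z AB' AC' AR' \<and> card AC' = card AC
           \<and> AC' \<inter> XB \<subseteq> Bs"
proof (cases "AC \<inter> XB \<subseteq> Bs")
  case True
  then show ?thesis
    using assms(5) by blast
next
  case False
  obtain g where "proper_2col E AB g"
    using assms(5) unfolding z_tight_OCC_def tight_OCC_def is_OCC_def bipartite_on_def by blast
  then interpret occ_pair V E XB XC XR f AB AC AR g
    using assms(1-3,5) by unfold_locales (auto simp: z_tight_OCC_def)
  obtain S where "S \<subseteq> Bs" and "S \<subseteq> XB" and "sep3 E XB XC f T1 T2 T3 TX S"
    and "card S \<le> card Y"
    using assms(4) by (rule star_property_separator)
  moreover have "Y \<noteq> {}"
    using False by (auto simp: Y_def)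
  ultimately interpret occ_exchange V E XB XC XR f AB AC AR g S
    by unfold_locales
  show ?thesis
    using z_tight_exchange[OF assms(5)] card_AC' \<open>S \<subseteq> Bs\<close> by (auto simp: AC'_def)
qed

end
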